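(* Let $0<q<1$ and $\nu\in\mathbb{C}$ with $q^\nu\notin q^{\mathbb{Z}}$. For $w\in\mathbb{C}\setminus\{0\}$ (complex powers of $w$ taken with one fixed branch of $\log w$) one has \[ \mathfrak{j}_\nu(2w;q)\,\mathfrak{j}_{-\nu-1}(2w;q)+\mathfrak{j}_{\nu+1}(2w;q)\,\mathfrak{j}_{-\nu}(2w;q) =\frac{q^{\nu(\nu+1)/2}(q^{\nu+1};q)_\infty(q^{-\nu};q)_\infty(-q^{1/2}w^2;q)_\infty}{(q;q)_\infty^{\,2}\,w}, \] and, equivalently, for $z\in\mathbb{C}$, \begin{align*} &{}_0\phi_1(;q^{\nu+1};q,-q^{\nu+1}z)\,{}_0\phi_1(;q^{-\nu};q,-q^{-\nu}z)\\ &-\frac{q^\nu z}{(1-q^\nu)(1-q^{\nu+1})}\,{}_0\phi_1(;q^{\nu+2};q,-q^{\nu+2}z)\,{}_0\phi_1(;q^{-\nu+1};q,-q^{-\nu+1}z)=(-z;q)_\infty. \end{align*}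
   Context: Complex powers of $q$ are $q^s=e^{s\log q}$. $(a;q)_k=\prod_{j=0}^{k-1}(1-aq^j)$, $(a;q)_\infty=\lim_k(a;q)_k$, ${}_0\phi_1(;b;q,z)=\sum_{k\ge0}\frac{q^{k(k-1)}}{(q;q)_k(b;q)_k}z^k$, and \[ \mathfrak{j}_\nu(x;q)=q^{\nu(\nu+1)/4}\frac{(q^{\nu+1};q)_\infty}{(q;q)_\infty}\left(\frac{x}{2}\right)^{\nu}{}_0\phi_1\!\left(;q^{\nu+1};q,-q^{\nu+3/2}\frac{x^2}{4}\right). \] *)

theory Defs
  imports "HOL-Analysis.Analysis"
begin

definition qpow :: "real \<Rightarrow> complex \<Rightarrow> complex" where
  "qpow q s = exp (s * complex_of_real (ln q))"

definition qpoch :: "complex \<Rightarrow> real \<Rightarrow> nat \<Rightarrow> complex" where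
  "qpoch a q k = (\<Prod>j<k. 1 - a * complex_of_real q ^ j)"

definition qpoch_inf :: "complex \<Rightarrow> real \<Rightarrow> complex" where
  "qpoch_inf a q = lim (\<lambda>k. qpoch a q k)"

definition phi01 :: "real \<Rightarrow> complex \<Rightarrow> complex \<Rightarrow> complex" where
  "phi01 q b z = (\<Sum>k. complex_of_real (q ^ (k * (k - 1)))
        / (qpoch (complex_of_real q) q k * qpoch b q k) * z ^ k)"

text \<open>The q-Bessel function j_nu(x;q); the parameter L is the chosen
  branch of log(x/2), so that (x/2)^nu = exp(nu L).\<close>
definition qjfrak :: "real \<Rightarrow> complex \<Rightarrow> complex \<Rightarrow> complex \<Rightarrow> complex" where
  "qjfrak q \<nu> L x =
     qpow q (\<nu> * (\<nu> + 1) / 4) * qpoch_inf (qpow q (\<nu> + 1)) q / qpoch_inf (complex_of_real q) q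
     * exp (\<nu> * L)
     * phi01 q (qpow q (\<nu> + 1)) (- qpow q (\<nu> + 3/2) * x ^ 2 / 4)"

end

theory Submission
  imports Defs
begin

text \<open>
  Put \<open>a = q\<^sup>\<nu>\<close> and let \<open>H(z)\<close> be the left-hand side of the \<open>\<^sub>0\<phi>\<^sub>1\<close> identity. The
  contiguous relations of \<open>\<^sub>0\<phi>\<^sub>1\<close> (shifting the parameter \<open>b \<mapsto> bq\<close> and the
  \<open>q\<close>-difference \<open>z \<mapsto> qz\<close>) express each of the four series at \<open>z\<close> through
  the series at \<open>qz\<close>, and the combination \<open>H\<close> then satisfies
  \<open>H(z) = (1 + z) H(qz)\<close> with \<open>H(0) = 1\<close>. Iterating,
  \<open>H(z) = (-z;q)\<^sub>k H(q\<^sup>k z)\<close>, and letting \<open>k \<rightarrow> \<infinity>\<close> gives \<open>H(z) = (-z;q)\<^sub>\<infinity>\<close> by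
  continuity of \<open>H\<close> at \<open>0\<close>. The identity for \<open>\<^bold>j\<^sub>\<nu>\<close> is the same statement with
  \<open>z = q\<^sup>1\<^sup>/\<^sup>2 w\<^sup>2\<close>, after pulling out the prefactors and using
  \<open>(b;q)\<^sub>\<infinity> = (1 - b)(bq;q)\<^sub>\<infinity>\<close>.
\<close>

lemma qpow_add: "qpow q (s + t) = qpow q s * qpow q t"
  by (simp add: qpow_def distrib_right exp_add)

lemma qpow_minus: "qpow q (- s) = inverse (qpow q s)"
  by (simp add: qpow_def exp_minus)

lemma qpow_nonzero: "qpow q s \<noteq> 0"
  by (simp add: qpow_def)

lemma qpow_of_nat:
  assumes "0 < q" shows "qpow q (of_nat n) = complex_of_real q ^ n"
proof -
  have "qpow q (of_nat n) = exp (complex_of_real (ln q)) ^ n"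
    unfolding qpow_def by (rule exp_of_nat_mult)
  with assms show ?thesis by (simp add: exp_of_real)
qed

lemma qpow_one: "0 < q \<Longrightarrow> qpow q 1 = complex_of_real q"
  using qpow_of_nat[of q 1] by simp

lemma qpow_add_one: "0 < q \<Longrightarrow> qpow q (s + 1) = qpow q s * complex_of_real q"
  by (simp add: qpow_add qpow_one)

lemma qpoch_0 [simp]: "qpoch a q 0 = 1"
  by (simp add: qpoch_def)

lemma qpoch_Suc: "qpoch a q (Suc k) = qpoch a q k * (1 - a * complex_of_real q ^ k)"
  by (simp add: qpoch_def lessThan_Suc mult.commute)

lemma qpoch_Suc_shift: "qpoch a q (Suc k) = (1 - a) * qpoch (a * complex_of_real q) q k"
  unfolding qpoch_def by (subst prod.lessThan_Suc_shift) (simp add: mult.assoc)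

lemma qpoch_LIMSEQ:
  assumes "0 < q" "q < 1"
  shows "(\<lambda>k. qpoch a q k) \<longlonglongrightarrow> qpoch_inf a q"
proof -
  let ?f = "\<lambda>j. 1 - a * complex_of_real q ^ j"
  have "summable (\<lambda>j. norm (?f j - 1))"
    using assms by (simp add: norm_mult norm_power summable_mult summable_geometric)
  hence "convergent_prod ?f"
    by (intro abs_convergent_prod_imp_convergent_prod summable_imp_abs_convergent_prod)
  hence "(\<lambda>n. qpoch a q (Suc n)) \<longlonglongrightarrow> prodinf ?f"
    by (simp add: qpoch_def lessThan_Suc_atMost convergent_prod_LIMSEQ)
  hence "(\<lambda>k. qpoch a q k) \<longlonglongrightarrow> prodinf ?f"
    by (rule LIMSEQ_imp_Suc)
  moreover from this have "qpoch_inf a q = prodinf ?f"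
    unfolding qpoch_inf_def by (rule limI)
  ultimately show ?thesis by simp
qed

lemma qpoch_inf_shift:
  assumes "0 < q" "q < 1"
  shows "qpoch_inf a q = (1 - a) * qpoch_inf (a * complex_of_real q) q"
proof -
  have "(\<lambda>k. qpoch a q (Suc k)) \<longlonglongrightarrow> (1 - a) * qpoch_inf (a * complex_of_real q) q"
    unfolding qpoch_Suc_shift by (intro tendsto_mult tendsto_const qpoch_LIMSEQ assms)
  hence "(\<lambda>k. qpoch a q k) \<longlonglongrightarrow> (1 - a) * qpoch_inf (a * complex_of_real q) q"
    by (rule LIMSEQ_imp_Suc)
  with qpoch_LIMSEQ[OF assms] show ?thesis
    using LIMSEQ_unique by blast
qed

definition qpoch_nonvanishing :: "real \<Rightarrow> complex \<Rightarrow> bool" where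
  "qpoch_nonvanishing q b \<longleftrightarrow> (\<forall>j. b * complex_of_real q ^ j \<noteq> 1)"

lemma qpoch_nonvanishing_shift:
  "qpoch_nonvanishing q b \<Longrightarrow> qpoch_nonvanishing q (b * complex_of_real q)"
  unfolding qpoch_nonvanishing_def by (metis mult.assoc power_Suc)

lemma qpoch_nonvanishing_q:
  assumes "0 < q" "q < 1"
  shows "qpoch_nonvanishing q (complex_of_real q)"
proof -
  have "q * q ^ j \<le> q" for j :: nat
    using assms by (simp add: mult_left_le power_le_one)
  hence "q * q ^ j < 1" for j :: nat
    using assms(2) by (meson le_less_trans)
  hence "complex_of_real (q * q ^ j) \<noteq> 1" for j :: nat
    by (metis of_real_eq_1_iff less_irrefl)
  thus ?thesis unfolding qpoch_nonvanishing_def by simp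
qed

lemma qpoch_nonvanishing_one_minus:
  "qpoch_nonvanishing q b \<Longrightarrow> 1 - b * complex_of_real q ^ j \<noteq> 0"
  unfolding qpoch_nonvanishing_def by simp

lemma qpoch_nonvanishing_neq_1: "qpoch_nonvanishing q b \<Longrightarrow> b \<noteq> 1"
  unfolding qpoch_nonvanishing_def by (metis mult_1_right power_0)

lemma qpoch_nonzero: "qpoch_nonvanishing q b \<Longrightarrow> qpoch b q k \<noteq> 0"
  unfolding qpoch_nonvanishing_def qpoch_def by auto

lemma power_pronic_Suc:
  fixes x :: "'a :: monoid_mult"
  shows "x ^ (Suc k * (Suc k - 1)) = x ^ (k * (k - 1)) * x ^ (2 * k)"
proof -
  have "Suc k * (Suc k - 1) = k * (k - 1) + 2 * k"
    by (cases k) (auto simp: algebra_simps)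
  thus ?thesis
    by (metis power_add)
qed

definition phi01_coeff :: "real \<Rightarrow> complex \<Rightarrow> nat \<Rightarrow> complex" where
  "phi01_coeff q b k =
     complex_of_real (q ^ (k * (k - 1))) / (qpoch (complex_of_real q) q k * qpoch b q k)"

lemma phi01_eq_powser: "phi01 q b z = (\<Sum>k. phi01_coeff q b k * z ^ k)"
  by (simp add: phi01_def phi01_coeff_def)

lemma phi01_coeff_param_shift:
  assumes "qpoch_nonvanishing q b" "qpoch_nonvanishing q (b * complex_of_real q)"
  shows "(1 - b) * phi01_coeff q b k
         = phi01_coeff q (b * complex_of_real q) k * (1 - b * complex_of_real q ^ k)"
proof -
  have "(1 - b) * qpoch (b * complex_of_real q) q k = qpoch b q k * (1 - b * complex_of_real q ^ k)"
    using qpoch_Suc[of b q k] qpoch_Suc_shift[of b q k] by simp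
  with qpoch_nonzero[OF assms(1)] qpoch_nonzero[OF assms(2)] show ?thesis
    unfolding phi01_coeff_def by (simp add: divide_simps)
qed

lemma phi01_coeff_Suc_param_shift:
  assumes "0 < q" "q < 1" "qpoch_nonvanishing q b"
  shows "phi01_coeff q b (Suc k) * (1 - complex_of_real q * complex_of_real q ^ k) * (1 - b)
         = phi01_coeff q (b * complex_of_real q) k * complex_of_real q ^ (2 * k)"
proof -
  note nv = qpoch_nonvanishing_q[OF assms(1,2)] assms(3)
  have cancel: "x * y / (A * \<alpha> * (\<beta> * B)) * \<alpha> * \<beta> = x / (A * B) * y"
    if "\<alpha> \<noteq> 0" "\<beta> \<noteq> 0" for x y A B \<alpha> \<beta> :: complex
    using that by (simp add: field_simps)
  have "1 - b \<noteq> 0"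
    using qpoch_nonvanishing_neq_1[OF nv(2)] by simp
  then show ?thesis
    unfolding phi01_coeff_def qpoch_Suc_shift[of b] unfolding qpoch_Suc power_pronic_Suc of_real_mult of_real_power
    by (rule cancel[OF qpoch_nonvanishing_one_minus[OF nv(1)]])
qed

lemma phi01_coeff_Suc:
  assumes "0 < q" "q < 1" "qpoch_nonvanishing q b"
  shows "phi01_coeff q b (Suc k)
           * ((1 - complex_of_real q * complex_of_real q ^ k) * (1 - b * complex_of_real q ^ k))
         = phi01_coeff q b k * complex_of_real q ^ (2 * k)"
proof -
  let ?c = "complex_of_real q"
  have "(1 - b) * (phi01_coeff q b (Suc k) * ((1 - ?c * ?c ^ k) * (1 - b * ?c ^ k)))
      = phi01_coeff q b (Suc k) * (1 - ?c * ?c ^ k) * (1 - b) * (1 - b * ?c ^ k)"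
    by (simp only: ac_simps)
  also have "\<dots> = phi01_coeff q (b * ?c) k * ?c ^ (2 * k) * (1 - b * ?c ^ k)"
    unfolding phi01_coeff_Suc_param_shift[OF assms] ..
  also have "\<dots> = (1 - b) * (phi01_coeff q b k * ?c ^ (2 * k))"
    unfolding mult.assoc[symmetric]
      phi01_coeff_param_shift[OF assms(3) qpoch_nonvanishing_shift[OF assms(3)]]
    by (simp only: ac_simps)
  finally show ?thesis
    using qpoch_nonvanishing_neq_1[OF assms(3)] by simp
qed

lemma phi01_coeff_nonzero:
  assumes "0 < q" "q < 1" "qpoch_nonvanishing q b"
  shows "phi01_coeff q b k \<noteq> 0"
  using assms qpoch_nonzero[OF qpoch_nonvanishing_q[OF assms(1,2)]] qpoch_nonzero[OF assms(3)]
  by (simp add: phi01_coeff_def)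

lemma phi01_conv_radius:
  assumes "0 < q" "q < 1" "qpoch_nonvanishing q b"
  shows "conv_radius (phi01_coeff q b) = \<infinity>"
proof (rule conv_radius_ratio_limit_ereal)
  let ?c = "complex_of_real q"
  note nz = phi01_coeff_nonzero[OF assms]
  show "\<forall>\<^sub>F n in sequentially. phi01_coeff q b n \<noteq> 0"
    using nz by simp
  have ratio: "norm (phi01_coeff q b n) / norm (phi01_coeff q b (Suc n))
      = norm (1 - ?c * ?c ^ n) * norm (1 - b * ?c ^ n) * inverse ((q ^ 2) ^ n)" for n
  proof -
    have "norm (phi01_coeff q b (Suc n)) * (norm (1 - ?c * ?c ^ n) * norm (1 - b * ?c ^ n))
        = norm (phi01_coeff q b n) * (q ^ 2) ^ n"
      using arg_cong[OF phi01_coeff_Suc[OF assms, of n], of norm] assms(1)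
      unfolding norm_mult norm_power norm_of_real by (simp add: power_mult)
    thus ?thesis
      using nz[of "Suc n"] assms(1) by (simp add: field_simps)
  qed
  have "(\<lambda>n. norm (1 - ?c * ?c ^ n) * norm (1 - b * ?c ^ n)) \<longlonglongrightarrow> norm (1 - ?c * 0) * norm (1 - b * 0)"
    using assms by (intro tendsto_intros LIMSEQ_power_zero) simp_all
  hence numerator: "(\<lambda>n. norm (1 - ?c * ?c ^ n) * norm (1 - b * ?c ^ n)) \<longlonglongrightarrow> 1"
    by simp
  have "LIM n sequentially. inverse ((q ^ 2) ^ n) :> at_top"
    using assms by (intro filterlim_inverse_at_top LIMSEQ_power_zero) (auto simp: power_less_one_iff)
  with numerator have "LIM n sequentially.
      norm (1 - ?c * ?c ^ n) * norm (1 - b * ?c ^ n) * inverse ((q ^ 2) ^ n) :> at_top"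
    by (rule filterlim_tendsto_pos_mult_at_top[OF _ zero_less_one])
  thus "(\<lambda>n. ereal (norm (phi01_coeff q b n) / norm (phi01_coeff q b (Suc n)))) \<longlonglongrightarrow> \<infinity>"
    unfolding ratio tendsto_PInfty_eq_at_top .
qed

lemma summable_phi01:
  assumes "0 < q" "q < 1" "qpoch_nonvanishing q b"
  shows "summable (\<lambda>k. phi01_coeff q b k * z ^ k)"
  by (rule summable_in_conv_radius) (simp add: phi01_conv_radius[OF assms])

lemma isCont_phi01:
  assumes "0 < q" "q < 1" "qpoch_nonvanishing q b" "isCont f z"
  shows "isCont (\<lambda>x. phi01 q b (f x)) z"
proof -
  have "isCont (phi01 q b) (f z)"
    unfolding phi01_eq_powser[abs_def]
    by (rule isCont_powser_converges_everywhere[OF summable_phi01[OF assms(1-3)]])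
  with assms(4) show ?thesis
    by (rule isCont_o2)
qed

lemma phi01_at_0 [simp]: "phi01 q b 0 = 1"
  unfolding phi01_eq_powser using powser_zero[of "phi01_coeff q b"]
  by (simp add: phi01_coeff_def)

lemma phi01_param_shift:
  assumes "0 < q" "q < 1" "qpoch_nonvanishing q b" "qpoch_nonvanishing q (b * complex_of_real q)"
  shows "(1 - b) * phi01 q b y
         = phi01 q (b * complex_of_real q) y - b * phi01 q (b * complex_of_real q) (complex_of_real q * y)"
proof -
  let ?c = "complex_of_real q"
  note sb = summable_phi01[OF assms(1-3)] and sbq = summable_phi01[OF assms(1,2,4)]
  have "(1 - b) * phi01 q b y = (\<Sum>k. (1 - b) * phi01_coeff q b k * y ^ k)"
    unfolding phi01_eq_powser using suminf_mult[OF sb, of "1 - b"] by (simp add: mult.assoc)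
  also have "\<dots> = (\<Sum>k. phi01_coeff q (b * ?c) k * y ^ k - b * (phi01_coeff q (b * ?c) k * (?c * y) ^ k))"
    unfolding phi01_coeff_param_shift[OF assms(3,4)] by (simp add: algebra_simps power_mult_distrib)
  also have "\<dots> = phi01 q (b * ?c) y - b * phi01 q (b * ?c) (?c * y)"
    unfolding phi01_eq_powser
    by (subst suminf_diff[OF sbq summable_mult[OF sbq], symmetric]) (simp add: suminf_mult[OF sbq])
  finally show ?thesis .
qed

lemma phi01_q_difference:
  assumes "0 < q" "q < 1" "qpoch_nonvanishing q b" "qpoch_nonvanishing q (b * complex_of_real q)"
  shows "phi01 q b y - phi01 q b (complex_of_real q * y)
         = y / (1 - b) * phi01 q (b * complex_of_real q) (complex_of_real q ^ 2 * y)"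
proof -
  let ?c = "complex_of_real q"
  note sb = summable_phi01[OF assms(1-3)] and sbq = summable_phi01[OF assms(1,2,4)]
  define u where "u k = phi01_coeff q b k * (1 - ?c ^ k) * y ^ k" for k
  have u_Suc: "u (Suc k) = y / (1 - b) * (phi01_coeff q (b * ?c) k * (?c ^ 2 * y) ^ k)" for k
  proof -
    have "1 - b \<noteq> 0"
      using qpoch_nonvanishing_neq_1[OF assms(3)] by simp
    hence "phi01_coeff q b (Suc k) * (1 - ?c * ?c ^ k) = phi01_coeff q (b * ?c) k * ?c ^ (2 * k) / (1 - b)"
      using phi01_coeff_Suc_param_shift[OF assms(1-3), of k] by (simp add: eq_divide_eq)
    hence "u (Suc k) = phi01_coeff q (b * ?c) k * ?c ^ (2 * k) / (1 - b) * (y * y ^ k)"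
      by (simp add: u_def)
    thus ?thesis
      by (simp add: power_mult power_mult_distrib)
  qed
  have "phi01 q b y - phi01 q b (?c * y)
      = (\<Sum>k. phi01_coeff q b k * y ^ k - phi01_coeff q b k * (?c * y) ^ k)"
    unfolding phi01_eq_powser by (rule suminf_diff[OF sb sb])
  also have "\<dots> = suminf u"
    by (simp add: u_def[abs_def] algebra_simps power_mult_distrib)
  also have "\<dots> = (\<Sum>k. u (Suc k))"
  proof -
    have "summable u"
      using summable_diff[OF sb[of y] sb[of "?c * y"]]
      by (simp add: u_def[abs_def] algebra_simps power_mult_distrib)
    thus ?thesis
      using suminf_split_head[of u] by (simp add: u_def)
  qed
  also have "\<dots> = y / (1 - b) * phi01 q (b * ?c) (?c ^ 2 * y)"
    unfolding u_Suc phi01_eq_powser by (rule suminf_mult[OF sbq])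
  finally show ?thesis .
qed

lemma qpoch_inf_eq_if_functional_equation:
  assumes "0 < q" "q < 1"
    and fe: "\<And>z. H z = (1 + z) * H (complex_of_real q * z)"
    and "isCont H 0" "H 0 = 1"
  shows "H z = qpoch_inf (- z) q"
proof -
  let ?c = "complex_of_real q"
  have iterate: "H z = qpoch (- z) q k * H (?c ^ k * z)" for k
  proof (induction k)
    case (Suc k)
    with fe[of "?c ^ k * z"] show ?case
      by (simp add: qpoch_Suc algebra_simps)
  qed simp
  have "(\<lambda>k. ?c ^ k * z) \<longlonglongrightarrow> 0"
    using assms(1,2) by (intro tendsto_mult_left_zero LIMSEQ_power_zero) simp
  hence "(\<lambda>k. H (?c ^ k * z)) \<longlonglongrightarrow> 1"
    using isCont_tendsto_compose[OF assms(4)] assms(5) by metis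
  hence "(\<lambda>k. qpoch (- z) q k * H (?c ^ k * z)) \<longlonglongrightarrow> qpoch_inf (- z) q * 1"
    by (intro tendsto_mult qpoch_LIMSEQ assms(1,2))
  thus ?thesis
    unfolding iterate[symmetric] by (simp add: LIMSEQ_const_iff)
qed

text \<open>With \<open>a = q\<^sup>\<nu>\<close> this is the left-hand side of the \<open>\<^sub>0\<phi>\<^sub>1\<close> identity.\<close>

definition phi01_cross :: "real \<Rightarrow> complex \<Rightarrow> complex \<Rightarrow> complex" where
  "phi01_cross q a z =
     phi01 q (a * of_real q) (- (a * of_real q) * z) * phi01 q (inverse a) (- inverse a * z)
     - a * z / ((1 - a) * (1 - a * of_real q))
       * phi01 q (a * of_real q * of_real q) (- (a * of_real q * of_real q) * z)
       * phi01 q (inverse a * of_real q) (- (inverse a * of_real q) * z)"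

lemma phi01_cross_recurrence_algebra:
  fixes a c z p r u s :: complex
  assumes "a \<noteq> 0" "1 - a \<noteq> 0" "1 - a * c \<noteq> 0"
  shows "(p - a * c * z / (1 - a * c) * r) * (u - inverse a * z / (1 - inverse a) * s)
     - a * z / ((1 - a) * (1 - a * c)) * ((1 - a * c) * p + a * c * r) * ((1 - inverse a) * u + inverse a * s)
     = (1 + z) * (p * u - a * (c * z) / ((1 - a) * (1 - a * c)) * r * s)"
proof -
  define d1 where "d1 = 1 - a"
  define d2 where "d2 = 1 - a * c"
  have d: "d1 \<noteq> 0" "d2 \<noteq> 0"
    using assms by (auto simp: d1_def d2_def)
  have inv: "inverse a * z / (1 - inverse a) = - z / d1" "1 - inverse a = - d1 / a"
    "inverse a * s = s / a"
    using assms unfolding d1_def by (simp_all add: field_simps)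
  have "(p - a * c * z / d2 * r) * (u - - z / d1 * s)
     - a * z / (d1 * d2) * (d2 * p + a * c * r) * (- d1 / a * u + s / a)
     = (1 + z) * (p * u - a * (c * z) / (d1 * d2) * r * s)"
    using d assms(1) by (simp add: field_simps)
  thus ?thesis
    unfolding inv(1) unfolding inv(2,3) d1_def d2_def .
qed

lemma phi01_cross_functional_equation:
  assumes q: "0 < q" "q < 1" and "a \<noteq> 0"
    and a: "qpoch_nonvanishing q a" and a': "qpoch_nonvanishing q (inverse a)"
  shows "phi01_cross q a z = (1 + z) * phi01_cross q a (complex_of_real q * z)"
proof -
  define c where "c = complex_of_real q"
  note ac = qpoch_nonvanishing_shift[OF a]
  note acc = qpoch_nonvanishing_shift[OF ac]
  note a'c = qpoch_nonvanishing_shift[OF a']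
  have "1 - a \<noteq> 0" "1 - a * c \<noteq> 0"
    using qpoch_nonvanishing_neq_1[OF a] qpoch_nonvanishing_neq_1[OF ac] by (simp_all add: c_def)
  define P where "P z = phi01 q (a * c) (- (a * c) * z)" for z
  define Q where "Q z = phi01 q (inverse a) (- inverse a * z)" for z
  define R where "R z = phi01 q (a * c * c) (- (a * c * c) * z)" for z
  define S where "S z = phi01 q (inverse a * c) (- (inverse a * c) * z)" for z
  have cross: "phi01_cross q a w = P w * Q w - a * w / ((1 - a) * (1 - a * c)) * R w * S w" for w
    unfolding phi01_cross_def P_def Q_def R_def S_def c_def ..
  have P_diff: "P z = P (c * z) - a * c * z / (1 - a * c) * R (c * z)"
    using phi01_q_difference[OF q ac acc, of "- (a * c) * z"]
    unfolding P_def R_def c_def by (simp add: algebra_simps power2_eq_square)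
  have Q_diff: "Q z = Q (c * z) - inverse a * z / (1 - inverse a) * S (c * z)"
    using phi01_q_difference[OF q a' a'c, of "- inverse a * z"]
    unfolding Q_def S_def c_def by (simp add: algebra_simps power2_eq_square)
  have R_shift: "R z = (1 - a * c) * P (c * z) + a * c * R (c * z)"
    using phi01_param_shift[OF q ac acc, of "- (a * c) * (c * z)"]
    unfolding P_def R_def c_def by (simp add: algebra_simps)
  have S_shift: "S z = (1 - inverse a) * Q (c * z) + inverse a * S (c * z)"
    using phi01_param_shift[OF q a' a'c, of "- inverse a * (c * z)"]
    unfolding Q_def S_def c_def by (simp add: algebra_simps)
  show ?thesis
    unfolding c_def[symmetric] cross P_diff Q_diff R_shift S_shift
    by (rule phi01_cross_recurrence_algebra) fact+
qed

lemma phi01_cross_eq_qpoch_inf: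
  assumes q: "0 < q" "q < 1" and "a \<noteq> 0"
    and a: "qpoch_nonvanishing q a" and a': "qpoch_nonvanishing q (inverse a)"
  shows "phi01_cross q a z = qpoch_inf (- z) q"
proof (rule qpoch_inf_eq_if_functional_equation[OF q])
  note ac = qpoch_nonvanishing_shift[OF a]
  show "phi01_cross q a z = (1 + z) * phi01_cross q a (complex_of_real q * z)" for z
    by (rule phi01_cross_functional_equation[OF assms])
  show "isCont (phi01_cross q a) 0"
    unfolding phi01_cross_def[abs_def]
    by (intro continuous_intros isCont_phi01[OF q] a a' ac qpoch_nonvanishing_shift)
       (use qpoch_nonvanishing_neq_1[OF a] qpoch_nonvanishing_neq_1[OF ac] in auto)
  show "phi01_cross q a 0 = 1"
    by (simp add: phi01_cross_def)
qed

lemma qpoch_nonvanishing_qpow: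
  assumes "0 < q" "\<forall>k::int. qpow q \<nu> \<noteq> qpow q (of_int k)"
  shows "qpoch_nonvanishing q (qpow q \<nu>)"
  unfolding qpoch_nonvanishing_def
proof
  fix j :: nat
  show "qpow q \<nu> * complex_of_real q ^ j \<noteq> 1"
  proof
    assume "qpow q \<nu> * complex_of_real q ^ j = 1"
    hence "qpow q \<nu> = inverse (qpow q (of_nat j))"
      unfolding qpow_of_nat[OF assms(1)]
      using inverse_unique[of "complex_of_real q ^ j" "qpow q \<nu>"] by (simp add: mult.commute)
    also have "\<dots> = qpow q (of_int (- int j))"
      by (simp add: qpow_minus)
    finally show False
      using assms(2) by blast
  qed
qed

lemma phi01_product_formula:
  assumes "0 < q" "q < 1" and not_int: "\<forall>k::int. qpow q \<nu> \<noteq> qpow q (of_int k)"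
  shows "phi01 q (qpow q (\<nu>+1)) (- qpow q (\<nu>+1) * z) * phi01 q (qpow q (-\<nu>)) (- qpow q (-\<nu>) * z)
           - qpow q \<nu> * z / ((1 - qpow q \<nu>) * (1 - qpow q (\<nu>+1)))
             * phi01 q (qpow q (\<nu>+2)) (- qpow q (\<nu>+2) * z)
             * phi01 q (qpow q (-\<nu>+1)) (- qpow q (-\<nu>+1) * z)
         = qpoch_inf (- z) q"
proof -
  have "\<forall>k::int. qpow q (- \<nu>) \<noteq> qpow q (of_int k)"
    using not_int by (metis inverse_inverse_eq of_int_minus qpow_minus)
  hence "qpoch_nonvanishing q (inverse (qpow q \<nu>))"
    unfolding qpow_minus[symmetric] by (rule qpoch_nonvanishing_qpow[OF assms(1)])
  moreover have "qpow q (\<nu> + 2) = qpow q (\<nu> + 1 + 1)"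
    by (simp add: add.assoc)
  ultimately show ?thesis
    using phi01_cross_eq_qpoch_inf[OF assms(1,2) qpow_nonzero qpoch_nonvanishing_qpow[OF assms(1) not_int]]
    unfolding qpow_add_one[OF assms(1)] qpow_minus by (simp add: phi01_cross_def)
qed

lemma qjfrak_at_double:
  "qjfrak q \<mu> L (2 * w) =
     qpow q (\<mu> * (\<mu> + 1) / 4) * qpoch_inf (qpow q (\<mu> + 1)) q / qpoch_inf (complex_of_real q) q
     * exp (\<mu> * L) * phi01 q (qpow q (\<mu> + 1)) (- qpow q (\<mu> + 1) * (qpow q (1/2) * w ^ 2))"
proof -
  have "\<mu> + 3/2 = (\<mu> + 1) + 1/2"
    by simp
  hence "qpow q (\<mu> + 3/2) = qpow q (\<mu> + 1) * qpow q (1/2)"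
    by (simp only: qpow_add)
  moreover have "(2 * w) ^ 2 / 4 = w ^ 2"
    by (simp add: power_mult_distrib)
  ultimately show ?thesis
    unfolding qjfrak_def by (simp add: mult.assoc)
qed

lemma qjfrak_mult_at_double:
  "qjfrak q \<mu> L (2 * w) * qjfrak q \<mu>' L (2 * w) =
     qpow q (\<mu> * (\<mu> + 1) / 4 + \<mu>' * (\<mu>' + 1) / 4)
     * qpoch_inf (qpow q (\<mu> + 1)) q * qpoch_inf (qpow q (\<mu>' + 1)) q / qpoch_inf (complex_of_real q) q ^ 2
     * exp ((\<mu> + \<mu>') * L)
     * phi01 q (qpow q (\<mu> + 1)) (- qpow q (\<mu> + 1) * (qpow q (1/2) * w ^ 2))
     * phi01 q (qpow q (\<mu>' + 1)) (- qpow q (\<mu>' + 1) * (qpow q (1/2) * w ^ 2))"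
  unfolding qjfrak_at_double qpow_add distrib_right exp_add by (simp add: power2_eq_square)

lemma product_formula_rearrangement:
  fixes h x3 x4 i p p' r r' a b s w :: complex
  assumes "a \<noteq> 1" "b \<noteq> 1" "w \<noteq> 0" "a \<noteq> 0"
  shows "h * ((1 - b) * x3) * ((1 - inverse a) * x4) / i * inverse w * p * p'
           + h * s * x3 * x4 / i * w * r * r'
         = h * ((1 - b) * x3) * ((1 - inverse a) * x4)
           * (p * p' - a * (s * w ^ 2) / ((1 - a) * (1 - b)) * r * r') / (i * w)"
proof -
  define d where "d = 1 - a"
  define e where "e = 1 - b"
  have inv: "1 - inverse a = - d / a"
    using assms by (simp add: d_def field_simps)
  have "d \<noteq> 0" "e \<noteq> 0"
    using assms by (auto simp: d_def e_def)
  then show ?thesis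
    unfolding inv d_def[symmetric] e_def[symmetric]
    using assms(3,4) by (cases "i = 0") (simp_all add: field_simps power2_eq_square)
qed

lemma qjfrak_product_formula:
  assumes q: "0 < q" "q < 1" and not_int: "\<forall>k::int. qpow q \<nu> \<noteq> qpow q (of_int k)"
    and "w \<noteq> 0" "exp L = w"
  shows "qjfrak q \<nu> L (2*w) * qjfrak q (-\<nu>-1) L (2*w) + qjfrak q (\<nu>+1) L (2*w) * qjfrak q (-\<nu>) L (2*w)
         = qpow q (\<nu> * (\<nu> + 1) / 2) * qpoch_inf (qpow q (\<nu> + 1)) q
           * qpoch_inf (qpow q (-\<nu>)) q * qpoch_inf (- qpow q (1/2) * w ^ 2) q
           / ((qpoch_inf (complex_of_real q) q) ^ 2 * w)"
proof -
  define F where "F b = phi01 q (qpow q b) (- qpow q b * (qpow q (1/2) * w ^ 2))" for b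
  have shifts: "- \<nu> - 1 + 1 = - \<nu>" "\<nu> + 1 + 1 = \<nu> + 2"
    by simp_all
  have exponents: "\<nu> * (\<nu> + 1) / 4 + (-\<nu>-1) * (-\<nu>-1 + 1) / 4 = \<nu> * (\<nu> + 1) / 2"
       "(\<nu> + 1) * (\<nu> + 1 + 1) / 4 + (-\<nu>) * (-\<nu> + 1) / 4 = \<nu> * (\<nu> + 1) / 2 + 1/2"
    by (simp_all add: field_simps)
  have exps: "exp ((\<nu> + (-\<nu>-1)) * L) = inverse w" "exp ((\<nu> + 1 + - \<nu>) * L) = w"
    using \<open>exp L = w\<close> by (simp_all add: exp_minus)
  have j1: "qjfrak q \<nu> L (2*w) * qjfrak q (-\<nu>-1) L (2*w)
      = qpow q (\<nu> * (\<nu> + 1) / 2) * qpoch_inf (qpow q (\<nu> + 1)) q * qpoch_inf (qpow q (-\<nu>)) q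
        / qpoch_inf (complex_of_real q) q ^ 2 * inverse w * F (\<nu> + 1) * F (-\<nu>)"
    unfolding qjfrak_mult_at_double exponents unfolding exps shifts F_def ..
  have j2: "qjfrak q (\<nu>+1) L (2*w) * qjfrak q (-\<nu>) L (2*w)
      = qpow q (\<nu> * (\<nu> + 1) / 2) * qpow q (1/2) * qpoch_inf (qpow q (\<nu> + 2)) q * qpoch_inf (qpow q (-\<nu> + 1)) q
        / qpoch_inf (complex_of_real q) q ^ 2 * w * F (\<nu> + 2) * F (-\<nu> + 1)"
    unfolding qjfrak_mult_at_double exponents unfolding exps shifts F_def qpow_add ..
  have X1: "qpoch_inf (qpow q (\<nu> + 1)) q = (1 - qpow q (\<nu> + 1)) * qpoch_inf (qpow q (\<nu> + 2)) q"
    using qpoch_inf_shift[OF q, of "qpow q (\<nu> + 1)"] unfolding qpow_add_one[OF q(1), symmetric] shifts .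
  have X2: "qpoch_inf (qpow q (- \<nu>)) q = (1 - inverse (qpow q \<nu>)) * qpoch_inf (qpow q (- \<nu> + 1)) q"
    using qpoch_inf_shift[OF q, of "qpow q (- \<nu>)"] unfolding qpow_add_one[OF q(1), symmetric]
    by (simp add: qpow_minus)
  have product: "qpoch_inf (- qpow q (1/2) * w ^ 2) q
      = F (\<nu> + 1) * F (-\<nu>) - qpow q \<nu> * (qpow q (1/2) * w ^ 2) / ((1 - qpow q \<nu>) * (1 - qpow q (\<nu>+1)))
        * F (\<nu> + 2) * F (-\<nu> + 1)"
    using phi01_product_formula[OF q not_int, of "qpow q (1/2) * w ^ 2"] unfolding F_def by simp
  have "qpow q \<nu> \<noteq> 1" "qpow q (\<nu> + 1) \<noteq> 1"
    using qpoch_nonvanishing_qpow[OF q(1) not_int]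
    by (auto simp: qpow_add_one[OF q(1)] dest: qpoch_nonvanishing_neq_1 qpoch_nonvanishing_shift)
  then show ?thesis
    unfolding j1 j2 product X1 X2
    by (rule product_formula_rearrangement[OF _ _ \<open>w \<noteq> 0\<close> qpow_nonzero])
qed

theorem mainTheorem8:
  fixes q :: real and \<nu> :: complex
  assumes "0 < q" and "q < 1"
    and "\<forall>k::int. qpow q \<nu> \<noteq> qpow q (of_int k)"
  shows "(\<forall>w L. w \<noteq> 0 \<longrightarrow> exp L = w \<longrightarrow>
            qjfrak q \<nu> L (2*w) * qjfrak q (-\<nu>-1) L (2*w)
            + qjfrak q (\<nu>+1) L (2*w) * qjfrak q (-\<nu>) L (2*w)
            = qpow q (\<nu> * (\<nu> + 1) / 2) * qpoch_inf (qpow q (\<nu> + 1)) q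
              * qpoch_inf (qpow q (-\<nu>)) q * qpoch_inf (- qpow q (1/2) * w ^ 2) q
              / ((qpoch_inf (complex_of_real q) q) ^ 2 * w))
       \<and> (\<forall>z::complex.
            phi01 q (qpow q (\<nu>+1)) (- qpow q (\<nu>+1) * z) * phi01 q (qpow q (-\<nu>)) (- qpow q (-\<nu>) * z)
            - qpow q \<nu> * z / ((1 - qpow q \<nu>) * (1 - qpow q (\<nu>+1)))
              * phi01 q (qpow q (\<nu>+2)) (- qpow q (\<nu>+2) * z)
              * phi01 q (qpow q (-\<nu>+1)) (- qpow q (-\<nu>+1) * z)
            = qpoch_inf (- z) q)"
  using qjfrak_product_formula[OF assms] phi01_product_formula[OF assms] by blast

end
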